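(* Let $G$ be a connected finite simple graph. If $G$ has a cut-vertex, then $\alpha^*(G)\geq 2$.
   Context: An independent set $I$ of $G$ is light if $\sum_{u\in I}d_G(u)\le |V(G)|-1$; $\alpha^*(G)$ is the maximum size of a light independent set of $G$. *)

theory Defs
  imports Main
begin

definition simple_graph :: "'a set \<Rightarrow> 'a set set \<Rightarrow> bool" where
  "simple_graph V E \<longleftrightarrow> finite V \<and> (\<forall>e\<in>E. e \<subseteq> V \<and> card e = 2)"

definition degree :: "'a set set \<Rightarrow> 'a \<Rightarrow> nat" where
  "degree E u = card {e\<in>E. u \<in> e}"

inductive reachable :: "'a set \<Rightarrow> 'a set set \<Rightarrow> 'a \<Rightarrow> 'a \<Rightarrow> bool"
  for V E where
  refl: "u \<in> V \<Longrightarrow> reachable V E u u"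
| step: "reachable V E u v \<Longrightarrow> {v, w} \<in> E \<Longrightarrow> reachable V E u w"

definition connected_graph :: "'a set \<Rightarrow> 'a set set \<Rightarrow> bool" where
  "connected_graph V E \<longleftrightarrow> V \<noteq> {} \<and> (\<forall>u\<in>V. \<forall>v\<in>V. reachable V E u v)"

definition del_vertex_E :: "'a set set \<Rightarrow> 'a \<Rightarrow> 'a set set" where
  "del_vertex_E E v = {e\<in>E. v \<notin> e}"

definition components :: "'a set \<Rightarrow> 'a set set \<Rightarrow> 'a set set" where
  "components V E = (\<lambda>u. {w\<in>V. reachable V E u w}) ` V"

definition num_components :: "'a set \<Rightarrow> 'a set set \<Rightarrow> nat" where
  "num_components V E = card (components V E)"

definition cut_vertex :: "'a set \<Rightarrow> 'a set set \<Rightarrow> 'a \<Rightarrow> bool" where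
  "cut_vertex V E v \<longleftrightarrow> v \<in> V \<and>
     num_components (V - {v}) (del_vertex_E E v) > num_components V E"

definition independent_set :: "'a set \<Rightarrow> 'a set set \<Rightarrow> 'a set \<Rightarrow> bool" where
  "independent_set V E I \<longleftrightarrow> I \<subseteq> V \<and> (\<forall>u\<in>I. \<forall>w\<in>I. {u, w} \<notin> E)"

definition light_independent_set :: "'a set \<Rightarrow> 'a set set \<Rightarrow> 'a set \<Rightarrow> bool" where
  "light_independent_set V E I \<longleftrightarrow> independent_set V E I \<and>
     int (\<Sum>u\<in>I. degree E u) \<le> int (card V) - 1"

definition alpha_star :: "'a set \<Rightarrow> 'a set set \<Rightarrow> nat" where
  "alpha_star V E = Max (card ` {I. light_independent_set V E I})"

end

theory Submission
  imports Defs
begin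

text \<open>If v is a cut-vertex, pick u and w in different components A and B of G - v. Every
  neighbour of u lies in A - {u} or is v, so deg u \<le> |A|, and likewise deg w \<le> |B|. As A and B
  are disjoint subsets of V - {v}, deg u + deg w \<le> |V| - 1, and u, w are non-adjacent, so
  {u, w} is a light independent set.\<close>

definition component :: "'a set \<Rightarrow> 'a set set \<Rightarrow> 'a \<Rightarrow> 'a set" where
  "component V E u = {w\<in>V. reachable V E u w}"

lemma components_eq_image_component: "components V E = component V E ` V"
  by (simp add: components_def component_def)

lemma reachable_trans:
  assumes "reachable V E u v" "reachable V E v w"
  shows "reachable V E u w"
  using assms(2,1) by (induction rule: reachable.induct) (auto intro: reachable.step)

lemma reachable_sym:
  assumes "reachable V E u v" "\<forall>e\<in>E. e \<subseteq> V"
  shows "reachable V E v u"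
  using assms
proof (induction rule: reachable.induct)
  case (refl u)
  then show ?case by (simp add: reachable.refl)
next
  case (step u v w)
  have "w \<in> V" using step by auto
  moreover have "{w, v} \<in> E" using step by (simp add: insert_commute)
  ultimately have "reachable V E w v" by (auto intro: reachable.refl reachable.step)
  with step show ?case by (blast intro: reachable_trans)
qed

lemma component_eq_if_reachable:
  assumes "reachable V E u w" "\<forall>e\<in>E. e \<subseteq> V"
  shows "component V E u = component V E w"
  using assms reachable_sym[OF assms] unfolding component_def
  by (blast intro: reachable_trans)

lemma disjoint_components_if_not_reachable:
  assumes "\<not> reachable V E u w" "\<forall>e\<in>E. e \<subseteq> V"
  shows "component V E u \<inter> component V E w = {}"
  using assms unfolding component_def by (blast intro: reachable_trans reachable_sym)

lemma num_components_pos: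
  assumes "finite V" "V \<noteq> {}"
  shows "num_components V E \<ge> 1"
  using assms by (simp add: num_components_def components_eq_image_component Suc_le_eq card_gt_0_iff)

lemma unreachable_pair_if_num_components_ge_2:
  assumes "num_components V E \<ge> 2" "\<forall>e\<in>E. e \<subseteq> V"
  obtains u w where "u \<in> V" "w \<in> V" "\<not> reachable V E u w"
proof -
  have "\<not> card (components V E) \<le> Suc 0" "finite (components V E)"
    using assms(1) by (auto simp: num_components_def intro: card_ge_0_finite)
  then obtain A B where "A \<in> components V E" "B \<in> components V E" "A \<noteq> B"
    using card_le_Suc0_iff_eq by blast
  then obtain u w where "u \<in> V" "w \<in> V" "component V E u \<noteq> component V E w"
    by (auto simp: components_eq_image_component)
  with component_eq_if_reachable[OF _ assms(2)] that show thesis by blast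
qed

lemma cut_vertex_separates:
  assumes "simple_graph V E" "cut_vertex V E v"
  obtains u w where "u \<in> V - {v}" "w \<in> V - {v}"
    "\<not> reachable (V - {v}) (del_vertex_E E v) u w"
proof (rule unreachable_pair_if_num_components_ge_2)
  have "num_components V E \<ge> 1"
    using assms by (intro num_components_pos) (auto simp: simple_graph_def cut_vertex_def)
  with assms(2) show "num_components (V - {v}) (del_vertex_E E v) \<ge> 2"
    by (simp add: cut_vertex_def)
  show "\<forall>e\<in>del_vertex_E E v. e \<subseteq> V - {v}"
    using assms(1) by (auto simp: simple_graph_def del_vertex_E_def)
qed (use that in auto)

lemma edge_reachable_del_vertex:
  assumes "{u, x} \<in> E" "u \<in> V - {v}" "x \<noteq> v"
  shows "reachable (V - {v}) (del_vertex_E E v) u x"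
  using assms by (auto simp: del_vertex_E_def intro: reachable.refl reachable.step)

lemma degree_le_card_component_del_vertex:
  assumes G: "simple_graph V E" and u: "u \<in> V - {v}"
  shows "degree E u \<le> card (component (V - {v}) (del_vertex_E E v) u)"
    (is "_ \<le> card ?C")
proof -
  have fin: "finite ?C" using G by (simp add: simple_graph_def component_def)
  have "{e\<in>E. u \<in> e} \<subseteq> (\<lambda>x. {u, x}) ` (insert v ?C - {u})"
  proof
    fix e assume e: "e \<in> {e\<in>E. u \<in> e}"
    then have "e \<subseteq> V" "card e = 2" using G by (auto simp: simple_graph_def)
    with e obtain x where x: "e = {u, x}" "x \<noteq> u" "x \<in> V"
      by (auto simp: card_2_iff)
    have "x \<in> insert v ?C"
      using e x edge_reachable_del_vertex[of u x E V v] u by (auto simp: component_def)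
    with x show "e \<in> (\<lambda>x. {u, x}) ` (insert v ?C - {u})" by auto
  qed
  then have "degree E u \<le> card ((\<lambda>x. {u, x}) ` (insert v ?C - {u}))"
    unfolding degree_def by (intro card_mono) (use fin in auto)
  also have "\<dots> \<le> card (insert v ?C - {u})" by (rule card_image_le) (use fin in auto)
  also have "\<dots> = card ?C"
    using fin u by (simp add: component_def reachable.refl)
  finally show ?thesis .
qed

lemma light_pair_if_separated_by_vertex:
  assumes G: "simple_graph V E" and v: "v \<in> V"
    and uw: "u \<in> V - {v}" "w \<in> V - {v}"
    and sep: "\<not> reachable (V - {v}) (del_vertex_E E v) u w"
  shows "light_independent_set V E {u, w}"
proof -
  define V' E' where "V' = V - {v}" and "E' = del_vertex_E E v"
  have E': "\<forall>e\<in>E'. e \<subseteq> V'" using G by (auto simp: simple_graph_def V'_def E'_def del_vertex_E_def)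
  have fin: "finite V" using G by (simp add: simple_graph_def)
  have "card (component V' E' u) + card (component V' E' w)
        = card (component V' E' u \<union> component V' E' w)"
    using fin disjoint_components_if_not_reachable[OF sep[folded V'_def E'_def] E']
    by (intro card_Un_disjoint[symmetric]) (auto simp: component_def V'_def)
  also have "\<dots> \<le> card V'"
    using fin by (intro card_mono) (auto simp: component_def V'_def)
  also have "\<dots> = card V - 1" using fin v by (simp add: V'_def)
  finally have "degree E u + degree E w \<le> card V - 1"
    using degree_le_card_component_del_vertex[OF G uw(1)]
      degree_le_card_component_del_vertex[OF G uw(2)]
    unfolding V'_def E'_def by linarith
  moreover have "u \<noteq> w" using sep uw by (auto intro: reachable.refl)
  moreover have "card V \<ge> 1" using fin v by (auto simp: Suc_le_eq card_gt_0_iff)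
  moreover have "independent_set V E {u, w}"
    using G sep uw edge_reachable_del_vertex[of u w E V v] edge_reachable_del_vertex[of w u E V v]
      reachable_sym[of "V - {v}" "del_vertex_E E v" w u]
    by (auto simp: independent_set_def simple_graph_def del_vertex_E_def insert_commute)
  ultimately show ?thesis by (simp add: light_independent_set_def)
qed

lemma card_le_alpha_star:
  assumes "finite V" "light_independent_set V E I"
  shows "card I \<le> alpha_star V E"
proof -
  have "{I. light_independent_set V E I} \<subseteq> Pow V"
    by (auto simp: light_independent_set_def independent_set_def)
  then have "finite {I. light_independent_set V E I}"
    using assms(1) finite_subset by blast
  with assms(2) show ?thesis unfolding alpha_star_def by (auto intro: Max_ge)
qed

theorem lemma2p3:
  fixes V :: "'a set" and E :: "'a set set"
  assumes "simple_graph V E"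
    and "connected_graph V E"
    and "\<exists>v. cut_vertex V E v"
  shows "alpha_star V E \<ge> 2"
proof -
  obtain v where v: "cut_vertex V E v" using assms(3) by blast
  then obtain u w where uw: "u \<in> V - {v}" "w \<in> V - {v}"
    and sep: "\<not> reachable (V - {v}) (del_vertex_E E v) u w"
    using cut_vertex_separates[OF assms(1) v] by blast
  have "light_independent_set V E {u, w}"
    using assms(1) v uw sep by (intro light_pair_if_separated_by_vertex) (auto simp: cut_vertex_def)
  then have "card {u, w} \<le> alpha_star V E"
    using assms(1) by (intro card_le_alpha_star) (auto simp: simple_graph_def)
  moreover have "u \<noteq> w" using sep uw by (auto intro: reachable.refl)
  ultimately show ?thesis by simp
qed

end
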